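(* Let $\rho>1$, $k\ge1$ an integer and $\kappa\in(\kappa^c_\rho(k),1)$. Then there exists $(a_i)_{2\le i\le k+1}\in[0,1)^k$ such that, with $d_{k+1}=\mathcal D(a_2,\dots,a_{k+1})$, $$1<\kappa^{k+1}\frac{(1+\rho)^2}{4\rho}\sqrt{\prod_{2\le j\le k+1}(1-a_j^2)}<\kappa\frac{d_{k+1}}{2\rho}.$$
   Context: Set $r_1=r_{k+1}=1+\rho$, $r_i=2$ for $2\le i\le k$; for $(a_i)_{2\le i\le k+1}\in[0,1)^k$ let $d_1=1+\rho$ and $d_i^2=d_{i-1}^2+2r_ia_id_{i-1}+r_i^2$ ($2\le i\le k+1$, $d_i>0$), $\mathcal D(a_2,\dots,a_{k+1})=d_{k+1}$; $$\kappa^c_\rho(k)=\inf_{0\le a_2,\dots,a_{k+1}<1}\max\left(\left(\frac{4\rho}{(1+\rho)^2\sqrt{\prod_{2\le i\le k+1}(1-a_i^2)}}\right)^{\frac1{k+1}},\ \frac{2\rho}{\mathcal D(a_2,\dots,a_{k+1})}\right).$$ *)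

theory Defs
  imports Complex_Main
begin

definition rad :: "real \<Rightarrow> nat \<Rightarrow> nat \<Rightarrow> real" where
  "rad rho k i = (if i = 1 \<or> i = k + 1 then 1 + rho else 2)"

text \<open>dseq rho k a i = d_i (for i >= 1), with d_1 = 1 + rho and
  d_i = sqrt (d_{i-1}^2 + 2 r_i a_i d_{i-1} + r_i^2).  The value at index 0 is a dummy.\<close>
fun dseq :: "real \<Rightarrow> nat \<Rightarrow> (nat \<Rightarrow> real) \<Rightarrow> nat \<Rightarrow> real" where
  "dseq rho k a 0 = 1 + rho"
| "dseq rho k a (Suc 0) = 1 + rho"
| "dseq rho k a (Suc (Suc n)) =
     (let i = Suc (Suc n); p = dseq rho k a (Suc n); ri = rad rho k i
      in sqrt (p ^ 2 + 2 * ri * a i * p + ri ^ 2))"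

definition Dfun :: "real \<Rightarrow> nat \<Rightarrow> (nat \<Rightarrow> real) \<Rightarrow> real" where
  "Dfun rho k a = dseq rho k a (k + 1)"

text \<open>Admissible parameter tuples (a_i)_{2<=i<=k+1} in [0,1)^k, as functions nat => real
  (values outside {2..k+1} are irrelevant).\<close>
definition admissible :: "nat \<Rightarrow> (nat \<Rightarrow> real) \<Rightarrow> bool" where
  "admissible k a \<longleftrightarrow> (\<forall>i\<in>{2..k+1}. 0 \<le> a i \<and> a i < 1)"

definition kappa_c :: "real \<Rightarrow> nat \<Rightarrow> real" where
  "kappa_c rho k = (INF a \<in> {a. admissible k a}.
      max (root (k + 1) (4 * rho / ((1 + rho)^2 * sqrt (\<Prod>i\<in>{2..k+1}. 1 - (a i)^2))))
          (2 * rho / Dfun rho k a))"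

end

theory Submission
  imports Defs
begin

text \<open>Since \<open>\<kappa>\<close> exceeds the infimum, some admissible \<open>a\<close> makes both terms of the maximum
  smaller than \<open>\<kappa>\<close>, i.e. both sides of the required chain exceed 1. If they come in the wrong
  order, increase the last parameter \<open>a (k+1)\<close>: this lowers the product to any prescribed positive
  value and can only enlarge \<open>d (k+1)\<close>, so the left side can be placed strictly between 1 and
  the right side.\<close>

lemma dseq_ge:
  assumes "rho > 0" and "\<And>i. i \<in> {2..m} \<Longrightarrow> 0 \<le> a i"
  shows "1 + rho \<le> dseq rho k a m"
  using assms
proof (induction rho k a m rule: dseq.induct)
  case (3 rho k a n)
  define p where "p = dseq rho k a (Suc n)"
  define r where "r = rad rho k (Suc (Suc n))"
  have p: "1 + rho \<le> p" using 3 unfolding p_def by simp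
  have "0 \<le> 2 * r * a (Suc (Suc n)) * p"
    using 3 p unfolding r_def rad_def by simp
  moreover have "(1 + rho)^2 \<le> p^2" using p \<open>rho > 0\<close> by (intro power_mono) auto
  ultimately have "(1 + rho)^2 \<le> p^2 + 2 * r * a (Suc (Suc n)) * p + r^2"
    using zero_le_power2[of r] by linarith
  then have "sqrt ((1 + rho)^2) \<le> sqrt (p^2 + 2 * r * a (Suc (Suc n)) * p + r^2)"
    using real_sqrt_le_mono by blast
  then show ?case using \<open>rho > 0\<close> by (simp add: Let_def p_def r_def)
qed auto

lemma dseq_mono:
  assumes "rho > 0" and "\<And>i. i \<in> {2..m} \<Longrightarrow> 0 \<le> a i \<and> a i \<le> b i"
  shows "dseq rho k a m \<le> dseq rho k b m"
  using assms
proof (induction rho k a m rule: dseq.induct)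
  case (3 rho k a n)
  define i where "i = Suc (Suc n)"
  define p where "p = dseq rho k a (Suc n)"
  define q where "q = dseq rho k b (Suc n)"
  define r where "r = rad rho k i"
  have pq: "p \<le> q" using 3 unfolding p_def q_def by simp
  have p: "0 \<le> p" using dseq_ge[of rho "Suc n" a k] 3 unfolding p_def by simp
  have r: "0 \<le> r" using 3 unfolding r_def rad_def by simp
  have ab: "0 \<le> a i" "a i \<le> b i" using "3.prems"(2)[of i] unfolding i_def by auto
  have "r * a i * p \<le> r * b i * q"
    using pq p r ab by (intro mult_mono) (auto intro: mult_left_mono)
  moreover have "p^2 \<le> q^2" using pq p by (rule power_mono)
  ultimately have "p^2 + 2 * r * a i * p + r^2 \<le> q^2 + 2 * r * b i * q + r^2" by simp
  then have "sqrt (p^2 + 2 * r * a i * p + r^2) \<le> sqrt (q^2 + 2 * r * b i * q + r^2)"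
    by (rule real_sqrt_le_mono)
  then show ?case by (simp add: Let_def i_def p_def q_def r_def)
qed auto

lemma Dfun_ge:
  assumes "rho > 0" and "admissible k a"
  shows "1 + rho \<le> Dfun rho k a"
  unfolding Dfun_def using assms by (intro dseq_ge) (auto simp: admissible_def)

lemma admissible_factor_pos:
  assumes "admissible k a" and "i \<in> {2..k+1}"
  shows "0 < 1 - (a i)^2"
proof -
  have "\<bar>a i\<bar> < 1" using assms unfolding admissible_def by auto
  then show ?thesis by (simp add: abs_square_less_1)
qed

lemma sqrt_factor_attains:
  fixes K Q a c :: real
  assumes "0 < K" "0 < Q" "0 \<le> a" "0 < c" "c \<le> K * sqrt (Q * (1 - a^2))"
  obtains s where "a \<le> s" "s < 1" "K * sqrt (Q * (1 - s^2)) = c"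
proof
  define w where "w = c^2 / (K^2 * Q)"
  have "0 < K * sqrt (Q * (1 - a^2))" using assms(4,5) by linarith
  then have "0 < sqrt (Q * (1 - a^2))" using assms(1) by (simp add: zero_less_mult_iff)
  then have "0 < Q * (1 - a^2)" by simp
  have "c^2 \<le> (K * sqrt (Q * (1 - a^2)))^2"
    using assms(4,5) by (intro power_mono) auto
  also have "\<dots> = K^2 * Q * (1 - a^2)"
    using \<open>0 < Q * (1 - a^2)\<close> by (simp add: power_mult_distrib)
  finally have w_le: "w \<le> 1 - a^2"
    using assms(1,2) unfolding w_def by (simp add: pos_divide_le_eq mult.commute)
  have w_pos: "0 < w" using assms unfolding w_def by simp
  show "a \<le> sqrt (1 - w)" using w_le by (intro real_le_rsqrt) simp
  show "sqrt (1 - w) < 1" using w_pos w_le assms(3) by simp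
  have "0 \<le> 1 - w" using w_le zero_le_power2[of a] by linarith
  then have "(sqrt (1 - w))^2 = 1 - w" by simp
  then have "Q * (1 - (sqrt (1 - w))^2) = (c / K)^2"
    using assms(1,2) unfolding w_def by (simp add: power_divide)
  then show "K * sqrt (Q * (1 - (sqrt (1 - w))^2)) = c"
    using assms(1,4) by simp
qed

lemma raise_last_parameter:
  fixes K c :: real
  assumes "rho > 0" "k \<ge> 1" "admissible k a" "0 < K" "0 < c"
    and "c \<le> K * sqrt (\<Prod>j\<in>{2..k+1}. 1 - (a j)^2)"
  obtains b where "admissible k b" "K * sqrt (\<Prod>j\<in>{2..k+1}. 1 - (b j)^2) = c"
    "Dfun rho k a \<le> Dfun rho k b"
proof -
  define Q where "Q = (\<Prod>j\<in>{2..k}. 1 - (a j)^2)"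
  have "0 < Q" unfolding Q_def using admissible_factor_pos[OF assms(3)] by (intro prod_pos) auto
  have a_last: "0 \<le> a (k+1)" "a (k+1) < 1" using assms(2,3) unfolding admissible_def by auto
  obtain s where s: "a (k+1) \<le> s" "s < 1" "K * sqrt (Q * (1 - s^2)) = c"
    using sqrt_factor_attains[OF \<open>0 < K\<close> \<open>0 < Q\<close> a_last(1) \<open>0 < c\<close>] assms(2,6)
    by (auto simp: Q_def)
  define b where "b = a(k+1 := s)"
  show thesis
  proof
    show "admissible k b" using assms(3) s a_last unfolding b_def admissible_def by auto
    have "(\<Prod>j\<in>{2..k}. 1 - (b j)^2) = Q" unfolding Q_def b_def by (rule prod.cong) auto
    then show "K * sqrt (\<Prod>j\<in>{2..k+1}. 1 - (b j)^2) = c"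
      using s assms(2) by (simp add: b_def)
    show "Dfun rho k a \<le> Dfun rho k b"
      unfolding Dfun_def using assms(1,3) s(1)
      by (intro dseq_mono) (auto simp: admissible_def b_def)
  qed
qed

lemma kappa_c_less_witness:
  assumes "rho > 0" and "kappa_c rho k < kappa"
  obtains a where "admissible k a"
    "1 < kappa ^ (k + 1) * ((1 + rho)^2 / (4 * rho)) * sqrt (\<Prod>j\<in>{2..k+1}. 1 - (a j)^2)"
    "1 < kappa * (Dfun rho k a / (2 * rho))"
proof -
  have "admissible k (\<lambda>_. 0)" unfolding admissible_def by simp
  then obtain a where a: "admissible k a"
    and lt: "max (root (k + 1) (4 * rho / ((1 + rho)^2 * sqrt (\<Prod>i\<in>{2..k+1}. 1 - (a i)^2))))
          (2 * rho / Dfun rho k a) < kappa"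
    using cInf_lessD[OF _ assms(2)[unfolded kappa_c_def]] by blast
  define P where "P = (\<Prod>i\<in>{2..k+1}. 1 - (a i)^2)"
  define D where "D = Dfun rho k a"
  define y where "y = 4 * rho / ((1 + rho)^2 * sqrt P)"
  have "0 < P" unfolding P_def using admissible_factor_pos[OF a] by (intro prod_pos) auto
  then have "0 < (1 + rho)^2 * sqrt P" using assms(1) by simp
  then have "0 < y" using assms(1) unfolding y_def by simp
  have "root (k + 1) y < kappa" using lt unfolding y_def P_def by simp
  moreover have "0 < kappa" using calculation \<open>0 < y\<close> real_root_gt_zero[of "k + 1" y] by linarith
  ultimately have "root (k + 1) y < root (k + 1) (kappa ^ (k + 1))"
    by (subst real_root_pos2) auto
  then have "y < kappa ^ (k + 1)" by (rule real_root_less_iff[THEN iffD1, rotated]) simp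
  then have "4 * rho < kappa ^ (k + 1) * ((1 + rho)^2 * sqrt P)"
    using \<open>0 < (1 + rho)^2 * sqrt P\<close> unfolding y_def by (simp add: divide_less_eq)
  then have X: "1 < kappa ^ (k + 1) * ((1 + rho)^2 / (4 * rho)) * sqrt P"
    using assms(1) by (simp add: field_simps)
  have "0 < D" unfolding D_def using Dfun_ge[OF assms(1) a] assms(1) by linarith
  moreover have "2 * rho / D < kappa" using lt unfolding D_def by simp
  ultimately have "1 < kappa * (D / (2 * rho))" using assms(1) by (simp add: field_simps)
  with that[OF a] X show thesis unfolding P_def D_def by blast
qed

theorem lemma2p10:
  fixes rho kappa :: real and k :: nat
  assumes "rho > 1" and "k \<ge> 1"
    and "kappa_c rho k < kappa" and "kappa < 1"
  shows "\<exists>a. admissible k a \<and>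
    1 < kappa ^ (k + 1) * ((1 + rho)^2 / (4 * rho)) * sqrt (\<Prod>j\<in>{2..k+1}. 1 - (a j)^2) \<and>
    kappa ^ (k + 1) * ((1 + rho)^2 / (4 * rho)) * sqrt (\<Prod>j\<in>{2..k+1}. 1 - (a j)^2)
      < kappa * (Dfun rho k a / (2 * rho))"
proof -
  have "0 < rho" using assms(1) by simp
  define K where "K = kappa ^ (k + 1) * ((1 + rho)^2 / (4 * rho))"
  define X where "X b = K * sqrt (\<Prod>j\<in>{2..k+1}. 1 - (b j)^2)" for b
  define M where "M b = kappa * (Dfun rho k b / (2 * rho))" for b
  obtain a where a: "admissible k a" "1 < X a" "1 < M a"
    using kappa_c_less_witness[OF \<open>0 < rho\<close> assms(3)] unfolding K_def X_def M_def by auto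
  consider "X a < M a" | "M a \<le> X a" by linarith
  then obtain b where "admissible k b" "1 < X b" "X b < M b"
  proof cases
    case 2
    define c where "c = (1 + M a) / 2"
    have "0 < Dfun rho k a" using Dfun_ge[OF \<open>0 < rho\<close> a(1)] \<open>0 < rho\<close> by linarith
    moreover have "0 < kappa * Dfun rho k a"
      using a(3) \<open>0 < rho\<close> unfolding M_def by (simp add: field_simps)
    ultimately have "0 < kappa" using zero_less_mult_pos2 by blast
    then have "0 < K" using \<open>0 < rho\<close> unfolding K_def by simp
    moreover have "0 < c" "c \<le> X a" using a(3) 2 unfolding c_def by auto
    ultimately obtain b where b: "admissible k b" "X b = c" "Dfun rho k a \<le> Dfun rho k b"
      using raise_last_parameter[OF \<open>0 < rho\<close> assms(2) a(1)] unfolding X_def by blast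
    have "M a \<le> M b"
      using b(3) \<open>0 < kappa\<close> \<open>0 < rho\<close> unfolding M_def by (intro mult_left_mono divide_right_mono) auto
    with that b a(3) show thesis unfolding c_def by auto
  qed (use a in blast)
  then show ?thesis unfolding X_def M_def K_def by blast
qed

end
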